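(* Let $1\le l,m\le n$ with $l+m>n$, and set $s=l+m-n$, $r=n-l+1$. Let $a=(a_{ij})$ be an $m\times n$ matrix, $b=(b_{ij})$ an $n\times l$ matrix, and $c=ab$ (an $m\times l$ matrix), over a commutative ring containing $\mathbb Q$. Then $$\det\big(a_{ij}\big)_{1\le i,j\le m}\cdot\det\big(b_{ij}\big)_{r\le i\le n,\,1\le j\le l}=\frac{1}{s!}\sum_{\sigma\in S_m}\sum_{\tau\in S_l}\operatorname{sgn}(\sigma)\operatorname{sgn}(\tau)\prod_{k=1}^{r-1}a_{\sigma(k),k}\prod_{t=1}^{l-s}b_{m+t,\tau(s+t)}\prod_{u=1}^{s}c_{\sigma(r-1+u),\tau(u)}.$$ In particular, for $W=lV\oplus mV^*$, the product of the left minor of order $m$ of $\overline{V^*}$ (columns $1,\dots,m$) and the lower minor of order $l$ of $\overline V$ (rows $r,\dots,n$) is expressed as a polynomial in left minors of order $m-s$ of $\overline{V^*}$, lower minors of order $l-s$ of $\overline V$, and entries of $\overline{V^*}\,\overline V$.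
   Context: $S_m$ is the symmetric group on $\{1,\dots,m\}$. $\overline V$ is the $n\times l$ matrix of coordinate functions on $lV$, $\overline{V^*}$ the $m\times n$ matrix of coordinate functions on $mV^*$ (with $a=\overline{V^*}$, $b=\overline V$ in the application). A left minor uses the first columns, a lower minor uses the last rows. *)

theory Defs
  imports "HOL-Combinatorics.Permutations"
begin

text \<open>Matrices are functions nat => nat => 'a, indexed from 1.
  Leibniz determinant of the k x k matrix (M i j) with 1 <= i,j <= k.\<close>
definition det_fn :: "nat \<Rightarrow> (nat \<Rightarrow> nat \<Rightarrow> 'a::comm_ring_1) \<Rightarrow> 'a" where
  "det_fn k M = (\<Sum>p | p permutes {1..k}. of_int (sign p) * (\<Prod>i\<in>{1..k}. M i (p i)))"

definition mat_prod_fn :: "nat \<Rightarrow> (nat \<Rightarrow> nat \<Rightarrow> 'a::comm_ring_1) \<Rightarrow> (nat \<Rightarrow> nat \<Rightarrow> 'a) \<Rightarrow> nat \<Rightarrow> nat \<Rightarrow> 'a" where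
  "mat_prod_fn n a b i j = (\<Sum>k\<in>{1..n}. a i k * b k j)"

end

(* Expanding every entry c_{ij} = sum_k a_{ik} b_{kj} turns s! times the right-hand side into
   sum_g A(g) B(g) over all g : {1..s} -> {1..n}, where A(g) is the determinant of the columns
   1, ..., r-1, g 1, ..., g s of a and B(g) that of the rows g 1, ..., g s, m+1, ..., n of b.
   A repeated column or row kills the term, so only g = r-1+psi with psi a permutation of {1..s}
   survive; for those, A(g) and B(g) are sign psi times the two minors, and there are s! of them. *)

theory Submission
  imports Defs
begin

(* Pairs each even permutation with an odd one instead of dividing by 2, so any commutative ring will do. *)
lemma sum_permutes_sign_eq_0:
  fixes F :: "('b \<Rightarrow> 'b) \<Rightarrow> 'a::comm_ring_1"
  assumes "finite S" "i \<in> S" "j \<in> S" "i \<noteq> j"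
    and F_swap: "\<And>\<sigma>. \<sigma> permutes S \<Longrightarrow> F (\<sigma> \<circ> transpose i j) = F \<sigma>"
  shows "(\<Sum>\<sigma> | \<sigma> permutes S. of_int (sign \<sigma>) * F \<sigma>) = 0"
proof -
  let ?t = "transpose i j"
  let ?even = "{\<sigma>. \<sigma> permutes S \<and> evenperm \<sigma>}" and ?odd = "{\<sigma>. \<sigma> permutes S \<and> \<not> evenperm \<sigma>}"
  have t: "?t permutes S" "permutation ?t" "\<not> evenperm ?t"
    using assms by (auto simp: permutes_swap_id permutation_swap_id evenperm_swap)
  have parity: "evenperm (\<sigma> \<circ> ?t) \<longleftrightarrow> \<not> evenperm \<sigma>" if "\<sigma> permutes S" for \<sigma>
    using evenperm_comp[OF permutes_imp_permutation[OF \<open>finite S\<close> that] t(2)] t(3) by simp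
  have swap_back: "\<sigma> \<circ> ?t \<circ> ?t = \<sigma>" for \<sigma>
    by (simp add: comp_assoc transpose_comp_involutory)
  have fin: "finite {\<sigma>. \<sigma> permutes S}"
    using \<open>finite S\<close> by (rule finite_permutations)
  have "(\<Sum>\<sigma> | \<sigma> permutes S. of_int (sign \<sigma>) * F \<sigma>)
      = (\<Sum>\<sigma>\<in>?even. of_int (sign \<sigma>) * F \<sigma>) + (\<Sum>\<sigma>\<in>?odd. of_int (sign \<sigma>) * F \<sigma>)"
    using fin by (subst sum.union_disjoint[symmetric]) (auto intro: sum.cong)
  also have "(\<Sum>\<sigma>\<in>?odd. of_int (sign \<sigma>) * F \<sigma>) = (\<Sum>\<sigma>\<in>?even. - (of_int (sign \<sigma>) * F \<sigma>))"
    by (rule sum.reindex_bij_witness[where i = "\<lambda>\<sigma>. \<sigma> \<circ> ?t" and j = "\<lambda>\<sigma>. \<sigma> \<circ> ?t"])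
       (auto simp: swap_back parity permutes_compose[OF t(1)] F_swap sign_def)
  finally show ?thesis
    by (simp add: sum_negf)
qed

lemma det_fn_eq_0_if_rows_eq:
  assumes "i \<in> {1..k}" "j \<in> {1..k}" "i \<noteq> j" "M i = M j"
  shows "det_fn k M = 0"
  unfolding det_fn_def
proof (rule sum_permutes_sign_eq_0[OF _ assms(1-3)])
  fix \<sigma> :: "nat \<Rightarrow> nat"
  assume "\<sigma> permutes {1..k}"
  have swap: "transpose i j permutes {1..k}"
    using assms by (simp add: permutes_swap_id)
  have "(\<Prod>x\<in>{1..k}. M x (\<sigma> (transpose i j x))) = (\<Prod>x\<in>{1..k}. M (transpose i j x) (\<sigma> x))"
    using prod.permute[OF swap, of "\<lambda>x. M x (\<sigma> (transpose i j x))"]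
    by (simp add: transpose_involutory)
  also have "\<dots> = (\<Prod>x\<in>{1..k}. M x (\<sigma> x))"
    using assms(4) by (intro prod.cong) (auto simp: transpose_def)
  finally show "(\<Prod>x\<in>{1..k}. M x ((\<sigma> \<circ> transpose i j) x)) = (\<Prod>x\<in>{1..k}. M x (\<sigma> x))"
    by simp
qed simp

lemma det_fn_rows_eq_0_if_not_inj:
  assumes "\<not> inj_on \<rho> {1..k}"
  shows "det_fn k (\<lambda>i. M (\<rho> i)) = 0"
  using assms unfolding inj_on_def by (auto intro: det_fn_eq_0_if_rows_eq)

lemma det_fn_permute_rows:
  assumes \<pi>: "\<pi> permutes {1..k}"
  shows "det_fn k (\<lambda>i. M (\<pi> i)) = of_int (sign \<pi>) * det_fn k M"
proof -
  have "det_fn k (\<lambda>i. M (\<pi> i))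
      = (\<Sum>p | p permutes {1..k}. of_int (sign (p \<circ> \<pi>)) * (\<Prod>i\<in>{1..k}. M (\<pi> i) (p (\<pi> i))))"
    unfolding det_fn_def by (subst sum_permutations_compose_right[OF \<pi>]) simp
  also have "\<dots> = (\<Sum>p | p permutes {1..k}. of_int (sign \<pi>) * (of_int (sign p) * (\<Prod>i\<in>{1..k}. M i (p i))))"
  proof (rule sum.cong)
    fix p assume "p \<in> {p. p permutes {1..k}}"
    then have "sign (p \<circ> \<pi>) = sign p * sign \<pi>"
      using \<pi> by (simp add: sign_compose permutes_imp_permutation[OF finite_atLeastAtMost])
    moreover have "(\<Prod>i\<in>{1..k}. M (\<pi> i) (p (\<pi> i))) = (\<Prod>i\<in>{1..k}. M i (p i))"
      using prod.permute[OF \<pi>, of "\<lambda>i. M i (p i)"] by simp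
    ultimately show "of_int (sign (p \<circ> \<pi>)) * (\<Prod>i\<in>{1..k}. M (\<pi> i) (p (\<pi> i)))
        = of_int (sign \<pi>) * (of_int (sign p) * (\<Prod>i\<in>{1..k}. M i (p i)))"
      by simp
  qed simp
  finally show ?thesis
    by (simp add: det_fn_def sum_distrib_left)
qed

lemma det_fn_transpose: "det_fn k (\<lambda>i j. M j i) = det_fn k M"
proof -
  have "det_fn k (\<lambda>i j. M j i) = (\<Sum>p | p permutes {1..k}. of_int (sign (inv p)) * (\<Prod>i\<in>{1..k}. M (inv p i) i))"
    unfolding det_fn_def by (subst sum_permutations_inverse) simp
  also have "\<dots> = det_fn k M"
    unfolding det_fn_def
  proof (rule sum.cong)
    fix p assume "p \<in> {p. p permutes {1..k}}"
    then have p: "p permutes {1..k}" by simp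
    have "(\<Prod>i\<in>{1..k}. M (inv p i) i) = (\<Prod>i\<in>{1..k}. M i (p i))"
      using prod.permute[OF p, of "\<lambda>i. M (inv p i) i"] by (simp add: permutes_inverses(2)[OF p])
    then show "of_int (sign (inv p)) * (\<Prod>i\<in>{1..k}. M (inv p i) i) = of_int (sign p) * (\<Prod>i\<in>{1..k}. M i (p i))"
      using p by (simp add: sign_inverse permutes_imp_permutation[OF finite_atLeastAtMost])
  qed simp
  finally show ?thesis .
qed

lemma det_fn_cong:
  assumes "\<And>i j. i \<in> {1..k} \<Longrightarrow> j \<in> {1..k} \<Longrightarrow> M i j = N i j"
  shows "det_fn k M = det_fn k N"
  unfolding det_fn_def
  by (intro sum.cong refl arg_cong2[where f = "(*)"] prod.cong assms)
     (auto simp: permutes_in_image simp del: atLeastAtMost_iff)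

definition idx_append :: "nat \<Rightarrow> (nat \<Rightarrow> 'b) \<Rightarrow> (nat \<Rightarrow> 'b) \<Rightarrow> nat \<Rightarrow> 'b" where
  "idx_append k f g i = (if i \<le> k then f i else g (i - k))"

lemma prod_idx_append:
  "(\<Prod>i\<in>{1..k + k'}. F i (idx_append k f g i)) = (\<Prod>i\<in>{1..k}. F i (f i)) * (\<Prod>j\<in>{1..k'}. F (k + j) (g j))"
proof -
  have "(\<Prod>i\<in>{1..k + k'}. F i (idx_append k f g i))
      = (\<Prod>i\<in>{1..k}. F i (idx_append k f g i)) * (\<Prod>i\<in>{k + 1..k + k'}. F i (idx_append k f g i))"
    by (rule prod.ub_add_nat) simp
  also have "(\<Prod>i\<in>{k + 1..k + k'}. F i (idx_append k f g i)) = (\<Prod>j\<in>{1..k'}. F (k + j) (g j))"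
    using prod.shift_bounds_cl_nat_ivl[of "\<lambda>i. F i (idx_append k f g i)" 1 k k']
    by (simp add: idx_append_def add.commute)
  finally show ?thesis
    by (simp add: idx_append_def)
qed

lemma shift_permutes:
  fixes d s :: nat
  assumes "\<psi> permutes {1..s}"
  defines "\<pi> \<equiv> \<lambda>x. if x \<in> {d + 1..d + s} then d + \<psi> (x - d) else x"
  shows "\<pi> permutes {d + 1..d + s}" and "sign \<pi> = sign \<psi>"
proof -
  interpret permutes_bij_finite \<psi> "{1..s}" "{d + 1..d + s}" "(+) d" "\<lambda>x. x - d" \<pi>
    by unfold_locales (use assms in \<open>auto simp: bij_betw_def image_iff intro!: bexI[where x = "_ - d"]\<close>)
  show "\<pi> permutes {d + 1..d + s}" and "sign \<pi> = sign \<psi>"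
    by (fact permutes_p' sign_p')+
qed

lemma restrict_shifted_permutation_if_inj_into:
  fixes g :: "nat \<Rightarrow> nat"
  assumes "g \<in> extensional {1..s}" and g_inj: "inj_on g {1..s}" and g_range: "g ` {1..s} \<subseteq> {d + 1..d + s}"
  shows "\<exists>\<psi>. \<psi> permutes {1..s} \<and> g = restrict (\<lambda>u. d + \<psi> u) {1..s}"
proof -
  define \<psi> where "\<psi> u = (if u \<in> {1..s} then g u - d else u)" for u
  have "inj_on \<psi> {1..s}"
  proof (rule inj_onI)
    fix x y
    assume x: "x \<in> {1..s}" and y: "y \<in> {1..s}" and "\<psi> x = \<psi> y"
    then have "g x - d = g y - d"
      by (simp add: \<psi>_def)
    moreover have "g x \<in> {d + 1..d + s}" and "g y \<in> {d + 1..d + s}"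
      using g_range x y by blast+
    ultimately have "g x = g y"
      by auto
    then show "x = y"
      using inj_onD[OF g_inj _ x y] by simp
  qed
  moreover have "\<psi> ` {1..s} \<subseteq> {1..s}"
    using g_range by (force simp: \<psi>_def)
  ultimately have "bij_betw \<psi> {1..s} {1..s}"
    by (simp add: bij_betw_def endo_inj_surj)
  then have "\<psi> permutes {1..s}"
    by (rule bij_imp_permutes) (auto simp: \<psi>_def)
  moreover have "g = restrict (\<lambda>u. d + \<psi> u) {1..s}"
  proof
    fix u
    show "g u = restrict (\<lambda>u. d + \<psi> u) {1..s} u"
      using g_range \<open>g \<in> extensional {1..s}\<close> by (cases "u \<in> {1..s}") (force simp: \<psi>_def extensional_def)+
  qed
  ultimately show ?thesis
    by blast
qed

lemma idx_append_inj_imp_range: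
  fixes g :: "nat \<Rightarrow> nat"
  assumes g: "g ` {1..s} \<subseteq> {1..d + s + e}"
    and col_inj: "inj_on (idx_append d id g) {1..d + s}"
    and row_inj: "inj_on (idx_append s g ((+) (d + s))) {1..s + e}"
  shows "g ` {1..s} \<subseteq> {d + 1..d + s}"
proof (rule image_subsetI)
  fix u
  assume u: "u \<in> {1..s}"
  have "g u \<in> {1..d + s + e}"
    using g u by blast
  moreover have "\<not> g u \<le> d"
  proof
    assume "g u \<le> d"
    have "g u = d + u"
      by (rule inj_onD[OF col_inj]) (use u \<open>g u \<le> d\<close> \<open>g u \<in> {1..d + s + e}\<close> in \<open>auto simp: idx_append_def\<close>)
    then show False
      using u \<open>g u \<le> d\<close> by simp
  qed
  moreover have "\<not> d + s < g u"
  proof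
    assume "d + s < g u"
    have "g u - d = u"
      by (rule inj_onD[OF row_inj]) (use u \<open>d + s < g u\<close> \<open>g u \<in> {1..d + s + e}\<close> in \<open>auto simp: idx_append_def\<close>)
    moreover have "u \<le> s"
      using u by simp
    ultimately show False
      using \<open>d + s < g u\<close> by arith
  qed
  ultimately show "g u \<in> {d + 1..d + s}"
    by simp
qed

lemma det_fn_idx_append_shifted_permutation_cols:
  fixes a :: "nat \<Rightarrow> nat \<Rightarrow> 'a::comm_ring_1"
  assumes \<psi>: "\<psi> permutes {1..s}"
  shows "det_fn (d + s) (\<lambda>i j. a j (idx_append d id (restrict (\<lambda>u. d + \<psi> u) {1..s}) i))
       = of_int (sign \<psi>) * det_fn (d + s) a"
proof -
  define \<pi> where "\<pi> x = (if x \<in> {d + 1..d + s} then d + \<psi> (x - d) else x)" for x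
  have \<pi>: "\<pi> permutes {d + 1..d + s}" "sign \<pi> = sign \<psi>"
    using shift_permutes[OF \<psi>, of d] unfolding \<pi>_def[abs_def] by simp_all
  have "idx_append d id (restrict (\<lambda>u. d + \<psi> u) {1..s}) i = \<pi> i" if "i \<in> {1..d + s}" for i
    using that by (auto simp: idx_append_def \<pi>_def)
  then have "det_fn (d + s) (\<lambda>i j. a j (idx_append d id (restrict (\<lambda>u. d + \<psi> u) {1..s}) i))
      = det_fn (d + s) (\<lambda>i j. a j (\<pi> i))"
    by (intro det_fn_cong) simp
  also have "\<dots> = of_int (sign \<pi>) * det_fn (d + s) (\<lambda>i j. a j i)"
    using det_fn_permute_rows[of \<pi> "d + s" "\<lambda>x j. a j x"] permutes_subset[OF \<pi>(1)] by simp
  finally show ?thesis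
    by (simp only: \<pi>(2) det_fn_transpose[of "d + s" a])
qed

lemma det_fn_idx_append_shifted_permutation_rows:
  fixes b :: "nat \<Rightarrow> nat \<Rightarrow> 'a::comm_ring_1"
  assumes \<psi>: "\<psi> permutes {1..s}"
  shows "det_fn (s + e) (\<lambda>i j. b (idx_append s (restrict (\<lambda>u. d + \<psi> u) {1..s}) ((+) (d + s)) i) j)
       = of_int (sign \<psi>) * det_fn (s + e) (\<lambda>i j. b (d + i) j)"
proof -
  have "idx_append s (restrict (\<lambda>u. d + \<psi> u) {1..s}) ((+) (d + s)) i = d + \<psi> i"
    if "i \<in> {1..s + e}" for i
    using that permutes_not_in[OF \<psi>, of i] by (auto simp: idx_append_def)
  then have "det_fn (s + e) (\<lambda>i j. b (idx_append s (restrict (\<lambda>u. d + \<psi> u) {1..s}) ((+) (d + s)) i) j)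
      = det_fn (s + e) (\<lambda>i. (\<lambda>x j. b (d + x) j) (\<psi> i))"
    by (intro det_fn_cong) simp
  also have "\<dots> = of_int (sign \<psi>) * det_fn (s + e) (\<lambda>i j. b (d + i) j)"
    by (rule det_fn_permute_rows) (rule permutes_subset[OF \<psi>], simp)
  finally show ?thesis .
qed

lemma det_fn_idx_append_product_shifted_permutation:
  fixes a b :: "nat \<Rightarrow> nat \<Rightarrow> 'a::comm_ring_1"
  assumes \<psi>: "\<psi> permutes {1..s}"
  shows "det_fn (d + s) (\<lambda>i j. a j (idx_append d id (restrict (\<lambda>u. d + \<psi> u) {1..s}) i))
         * det_fn (s + e) (\<lambda>i j. b (idx_append s (restrict (\<lambda>u. d + \<psi> u) {1..s}) ((+) (d + s)) i) j)
       = det_fn (d + s) a * det_fn (s + e) (\<lambda>i j. b (d + i) j)"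
proof -
  have sign_sq: "(of_int (sign \<psi>) :: 'a) * of_int (sign \<psi>) = 1"
    by (metis of_int_1 of_int_mult sign_idempotent)
  have "(of_int (sign \<psi>) * det_fn (d + s) a) * (of_int (sign \<psi>) * det_fn (s + e) (\<lambda>i j. b (d + i) j))
      = (of_int (sign \<psi>) * of_int (sign \<psi>)) * (det_fn (d + s) a * det_fn (s + e) (\<lambda>i j. b (d + i) j))"
    by (simp only: ac_simps)
  then show ?thesis
    by (simp only: det_fn_idx_append_shifted_permutation_cols[OF \<psi>]
        det_fn_idx_append_shifted_permutation_rows[OF \<psi>] sign_sq mult_1_left)
qed

lemma det_fn_idx_append_product_eq_0:
  fixes a b :: "nat \<Rightarrow> nat \<Rightarrow> 'a::comm_ring_1"
  assumes g: "g \<in> PiE {1..s} (\<lambda>_. {1..d + s + e})"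
    and not_shifted: "g \<notin> (\<lambda>\<psi>. restrict (\<lambda>u. d + \<psi> u) {1..s}) ` {\<psi>. \<psi> permutes {1..s}}"
  shows "det_fn (d + s) (\<lambda>i j. a j (idx_append d id g i))
         * det_fn (s + e) (\<lambda>i j. b (idx_append s g ((+) (d + s)) i) j) = 0"
proof (cases "inj_on (idx_append d id g) {1..d + s} \<and> inj_on (idx_append s g ((+) (d + s))) {1..s + e}")
  case True
  then have row_inj: "inj_on (idx_append s g ((+) (d + s))) {1..s + e}"
    by blast
  have "inj_on g {1..s}"
  proof (rule inj_onI)
    fix x y
    assume x: "x \<in> {1..s}" and y: "y \<in> {1..s}" and "g x = g y"
    then have "idx_append s g ((+) (d + s)) x = idx_append s g ((+) (d + s)) y"
      by (simp add: idx_append_def)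
    then show "x = y"
      by (rule inj_onD[OF row_inj]) (use x y in auto)
  qed
  moreover have "g ` {1..s} \<subseteq> {d + 1..d + s}"
    using True g by (intro idx_append_inj_imp_range[where e = e]) (auto simp: PiE_iff)
  ultimately have "g \<in> (\<lambda>\<psi>. restrict (\<lambda>u. d + \<psi> u) {1..s}) ` {\<psi>. \<psi> permutes {1..s}}"
    using restrict_shifted_permutation_if_inj_into[of g s d] g by (auto simp: PiE_iff)
  with not_shifted show ?thesis
    by contradiction
next
  case False
  then show ?thesis
    using det_fn_rows_eq_0_if_not_inj[of "idx_append d id g" "d + s" "\<lambda>x j. a j x"]
      det_fn_rows_eq_0_if_not_inj[of "idx_append s g ((+) (d + s))" "s + e" b]
    by auto
qed

lemma inj_on_restrict_shifted_permutations:
  fixes d s :: nat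
  shows "inj_on (\<lambda>\<psi>. restrict (\<lambda>u. d + \<psi> u) {1..s}) {\<psi>. \<psi> permutes {1..s}}"
proof (rule inj_onI)
  fix \<psi> \<phi> :: "nat \<Rightarrow> nat"
  assume \<psi>: "\<psi> \<in> {\<psi>. \<psi> permutes {1..s}}" and \<phi>: "\<phi> \<in> {\<psi>. \<psi> permutes {1..s}}"
    and eq: "restrict (\<lambda>u. d + \<psi> u) {1..s} = restrict (\<lambda>u. d + \<phi> u) {1..s}"
  show "\<psi> = \<phi>"
  proof
    fix u
    show "\<psi> u = \<phi> u"
      using fun_cong[OF eq, of u] \<psi> \<phi> by (cases "u \<in> {1..s}") (simp_all add: permutes_not_in)
  qed
qed

lemma prod_mat_prod_fn_eq_sum_PiE:
  fixes s :: nat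
  shows "(\<Prod>u\<in>{1..s}. mat_prod_fn n a b (x u) (y u))
     = (\<Sum>g\<in>PiE {1..s} (\<lambda>_. {1..n}). (\<Prod>u\<in>{1..s}. a (x u) (g u)) * (\<Prod>u\<in>{1..s}. b (g u) (y u)))"
  unfolding mat_prod_fn_def by (subst prod_sum_PiE) (simp_all add: prod.distrib)

lemma sum_sign_prod_mat_prod_fn_eq_sum_det_fn:
  fixes a b :: "nat \<Rightarrow> nat \<Rightarrow> 'a::comm_ring_1"
  shows "(\<Sum>\<sigma> | \<sigma> permutes {1..d + s}. \<Sum>\<tau> | \<tau> permutes {1..s + e}.
            of_int (sign \<sigma>) * of_int (sign \<tau>)
            * (\<Prod>k\<in>{1..d}. a (\<sigma> k) k)
            * (\<Prod>t\<in>{1..e}. b (d + s + t) (\<tau> (s + t)))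
            * (\<Prod>u\<in>{1..s}. mat_prod_fn n a b (\<sigma> (d + u)) (\<tau> u)))
       = (\<Sum>g\<in>PiE {1..s} (\<lambda>_. {1..n}).
            det_fn (d + s) (\<lambda>i j. a j (idx_append d id g i))
            * det_fn (s + e) (\<lambda>i j. b (idx_append s g ((+) (d + s)) i) j))"
    (is "?lhs = (\<Sum>g\<in>?P. _)")
proof -
  define A where "A \<sigma> g = (\<Prod>k\<in>{1..d + s}. a (\<sigma> k) (idx_append d id g k))" for \<sigma> g
  define B where "B \<tau> g = (\<Prod>i\<in>{1..s + e}. b (idx_append s g ((+) (d + s)) i) (\<tau> i))" for \<tau> g
  have "A \<sigma> g = (\<Prod>k\<in>{1..d}. a (\<sigma> k) k) * (\<Prod>u\<in>{1..s}. a (\<sigma> (d + u)) (g u))" for \<sigma> g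
    unfolding A_def using prod_idx_append[where F = "\<lambda>k x. a (\<sigma> k) x"] by simp
  moreover have "B \<tau> g = (\<Prod>u\<in>{1..s}. b (g u) (\<tau> u)) * (\<Prod>t\<in>{1..e}. b (d + s + t) (\<tau> (s + t)))" for \<tau> g
    unfolding B_def using prod_idx_append[where F = "\<lambda>i x. b x (\<tau> i)"] by simp
  ultimately have expand: "of_int (sign \<sigma>) * of_int (sign \<tau>) * (\<Prod>k\<in>{1..d}. a (\<sigma> k) k)
      * (\<Prod>t\<in>{1..e}. b (d + s + t) (\<tau> (s + t)))
      * (\<Prod>u\<in>{1..s}. mat_prod_fn n a b (\<sigma> (d + u)) (\<tau> u))
      = (\<Sum>g\<in>?P. of_int (sign \<sigma>) * A \<sigma> g * (of_int (sign \<tau>) * B \<tau> g))" for \<sigma> \<tau>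
    unfolding prod_mat_prod_fn_eq_sum_PiE sum_distrib_left
    by (intro sum.cong refl) (simp add: ac_simps)
  have "?lhs = (\<Sum>\<sigma> | \<sigma> permutes {1..d + s}. \<Sum>\<tau> | \<tau> permutes {1..s + e}. \<Sum>g\<in>?P.
                 of_int (sign \<sigma>) * A \<sigma> g * (of_int (sign \<tau>) * B \<tau> g))"
    by (simp only: expand)
  also have "\<dots> = (\<Sum>\<sigma> | \<sigma> permutes {1..d + s}. \<Sum>g\<in>?P. \<Sum>\<tau> | \<tau> permutes {1..s + e}.
                 of_int (sign \<sigma>) * A \<sigma> g * (of_int (sign \<tau>) * B \<tau> g))"
    by (rule sum.cong[OF refl], rule sum.swap)
  also have "\<dots> = (\<Sum>g\<in>?P. \<Sum>\<sigma> | \<sigma> permutes {1..d + s}. \<Sum>\<tau> | \<tau> permutes {1..s + e}.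
                 of_int (sign \<sigma>) * A \<sigma> g * (of_int (sign \<tau>) * B \<tau> g))"
    by (rule sum.swap)
  also have "\<dots> = (\<Sum>g\<in>?P. (\<Sum>\<sigma> | \<sigma> permutes {1..d + s}. of_int (sign \<sigma>) * A \<sigma> g)
                         * (\<Sum>\<tau> | \<tau> permutes {1..s + e}. of_int (sign \<tau>) * B \<tau> g))"
    by (simp only: sum_product)
  finally show ?thesis
    by (simp add: det_fn_def A_def B_def)
qed

theorem det_mul_lower_minor_eq_sum_mat_prod_fn:
  fixes a b :: "nat \<Rightarrow> nat \<Rightarrow> 'a::comm_ring_1"
  assumes m: "m = d + s" and l: "l = s + e" and n: "n = m + e"
  shows "(\<Sum>\<sigma> | \<sigma> permutes {1..m}. \<Sum>\<tau> | \<tau> permutes {1..l}.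
            of_int (sign \<sigma>) * of_int (sign \<tau>)
            * (\<Prod>k\<in>{1..d}. a (\<sigma> k) k)
            * (\<Prod>t\<in>{1..e}. b (m + t) (\<tau> (s + t)))
            * (\<Prod>u\<in>{1..s}. mat_prod_fn n a b (\<sigma> (d + u)) (\<tau> u)))
       = of_nat (fact s) * (det_fn m a * det_fn l (\<lambda>i j. b (d + i) j))"
proof -
  let ?P = "PiE {1..s} (\<lambda>_. {1..d + s + e})"
  let ?perms = "{\<psi>. \<psi> permutes {1..s}}"
  let ?shifted = "\<lambda>\<psi>. restrict (\<lambda>u. d + \<psi> u) {1..s}"
  let ?D = "\<lambda>g. det_fn (d + s) (\<lambda>i j. a j (idx_append d id g i))
               * det_fn (s + e) (\<lambda>i j. b (idx_append s g ((+) (d + s)) i) j)"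
  have shifted_P: "?shifted ` ?perms \<subseteq> ?P"
  proof (rule image_subsetI)
    fix \<psi>
    assume "\<psi> \<in> ?perms"
    then have "\<psi> u \<in> {1..s}" if "u \<in> {1..s}" for u
      using that permutes_in_image[of \<psi> "{1..s}" u] by blast
    then show "?shifted \<psi> \<in> ?P"
      by force
  qed
  have "(\<Sum>\<sigma> | \<sigma> permutes {1..d + s}. \<Sum>\<tau> | \<tau> permutes {1..s + e}.
            of_int (sign \<sigma>) * of_int (sign \<tau>)
            * (\<Prod>k\<in>{1..d}. a (\<sigma> k) k)
            * (\<Prod>t\<in>{1..e}. b (d + s + t) (\<tau> (s + t)))
            * (\<Prod>u\<in>{1..s}. mat_prod_fn (d + s + e) a b (\<sigma> (d + u)) (\<tau> u)))
      = (\<Sum>g\<in>?P. ?D g)"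
    by (rule sum_sign_prod_mat_prod_fn_eq_sum_det_fn)
  also have "\<dots> = (\<Sum>g\<in>?shifted ` ?perms. ?D g)"
    by (rule sum.mono_neutral_right)
       (use shifted_P det_fn_idx_append_product_eq_0[where a = a and b = b] in \<open>simp_all add: finite_PiE\<close>)
  also have "\<dots> = (\<Sum>\<psi>\<in>?perms. det_fn (d + s) a * det_fn (s + e) (\<lambda>i j. b (d + i) j))"
    unfolding sum.reindex[OF inj_on_restrict_shifted_permutations]
    by (intro sum.cong refl) (simp only: comp_apply mem_Collect_eq det_fn_idx_append_product_shifted_permutation)
  also have "\<dots> = of_nat (fact s) * (det_fn (d + s) a * det_fn (s + e) (\<lambda>i j. b (d + i) j))"
    using card_permutations[of "{1..s}" s] by simp
  finally show ?thesis
    unfolding m l n by (simp only: add.assoc)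
qed

theorem mainTheorem15:
  fixes l m n :: nat
    and a b :: "nat \<Rightarrow> nat \<Rightarrow> 'a::comm_ring_1"
  assumes "1 \<le> l" "l \<le> n" "1 \<le> m" "m \<le> n" "l + m > n"
    and rat: "\<And>k::nat. k \<noteq> 0 \<Longrightarrow> \<exists>y::'a. of_nat k * y = 1"
  shows "let s = l + m - n; r = n - l + 1; c = mat_prod_fn n a b in
    \<forall>inv_fact::'a. of_nat (fact s) * inv_fact = 1 \<longrightarrow>
      det_fn m a * det_fn l (\<lambda>i j. b (r - 1 + i) j) =
      inv_fact *
        (\<Sum>\<sigma> | \<sigma> permutes {1..m}. \<Sum>\<tau> | \<tau> permutes {1..l}.
           of_int (sign \<sigma>) * of_int (sign \<tau>)
           * (\<Prod>k\<in>{1..r-1}. a (\<sigma> k) k)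
           * (\<Prod>t\<in>{1..l-s}. b (m + t) (\<tau> (s + t)))
           * (\<Prod>u\<in>{1..s}. c (\<sigma> (r - 1 + u)) (\<tau> u)))"
proof -
  let ?s = "l + m - n" and ?d = "n - l + 1 - 1"
  have "m = ?d + ?s" and "l = ?s + (l - ?s)" and "n = m + (l - ?s)"
    using assms(1-5) by simp_all
  from det_mul_lower_minor_eq_sum_mat_prod_fn[OF this, where a = a and b = b]
  show ?thesis
    unfolding Let_def by (auto simp: mult.assoc[symmetric] mult.commute[of _ "of_nat (fact ?s)"])
qed

end
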